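(* In the setting described in the context, the computable error estimator $\eta^{(2)}$ satisfies $$|J(u)-J(\tilde u)|-|J(u)-J(u_h^{(2)})|\le|\eta^{(2)}|\le|J(u)-J(\tilde u)|+|J(u)-J(u_h^{(2)})|.$$
   Context: Let $U$ and $V$ be real Banach spaces with dual $V^*$. Let $\mathcal{A}:U\to V^*$ be a (nonlinear) operator that is three times continuously Fréchet differentiable, and let $J:U\to\mathbb{R}$ be three times continuously Fréchet differentiable. Notation: $\mathcal{A}(w)(v)$ is the value of $\mathcal{A}(w)\in V^*$ at $v\in V$. For fixed $v$, $\mathcal{A}'(w)(\varphi,v)$, $\mathcal{A}''(w)(\varphi,\psi,v)$ and $\mathcal{A}'''(w)(\varphi,\psi,\chi,v)$ denote the first, second and third Fréchet derivatives of $w\mapsto\mathcal{A}(w)(v)$ at $w$ in the directions $\varphi,\psi,\chi\in U$. Analogously, $J'(w)(\varphi)$ and $J'''(w)(\varphi,\psi,\chi)$ denote derivatives of $J$. Let $u\in U$ satisfy $\mathcal{A}(u)(v)=0$ for all $v\in V$, and let $z\in V$ satisfy $\mathcal{A}'(u)(\varphi,z)=J'(u)(\varphi)$ for all $\varphi\in U$. Let $U_h^{(2)}\subset U$ and $V_h^{(2)}\subset V$ be finite-dimensional subspaces. Let $u_h^{(2)}\in U_h^{(2)}$ satisfy $\mathcal{A}(u_h^{(2)})(v)=0$ for all $v\in V_h^{(2)}$. Let $z_h^{(2)}\in V_h^{(2)}$ satisfy $\mathcal{A}'(u_h^{(2)})(\varphi,z_h^{(2)})=J'(u_h^{(2)})(\varphi)$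 for all $\varphi\in U_h^{(2)}$. Let $\tilde u\in U_h^{(2)}$ and $\tilde z\in V_h^{(2)}$ be arbitrary fixed elements. Define $\rho(\tilde u)(v):=-\mathcal{A}(\tilde u)(v)$ and $\rho^*(\tilde u,\tilde z)(\varphi):=J'(\tilde u)(\varphi)-\mathcal{A}'(\tilde u)(\varphi,\tilde z)$. With $e^{(2)}:=u_h^{(2)}-\tilde u$ and $e^{(2),*}:=z_h^{(2)}-\tilde z$, define $$\mathcal{R}^{(3)(2)}:=\frac12\int_0^1\Big[J'''(\tilde u+se^{(2)})(e^{(2)},e^{(2)},e^{(2)})-\mathcal{A}'''(\tilde u+se^{(2)})(e^{(2)},e^{(2)},e^{(2)},\tilde z+se^{(2),*})-3\mathcal{A}''(\tilde u+se^{(2)})(e^{(2)},e^{(2)},e^{(2),*})\Big]s(s-1)\,ds,$$ and $$\eta^{(2)}:=\tfrac12\rho(\tilde u)(z_h^{(2)}-\tilde z)+\tfrac12\rho^*(\tilde u,\tilde z)(u_h^{(2)}-\tilde u)+\rho(\tilde u)(\tilde z)+\mathcal{R}^{(3)(2)}.$$ *)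

theory Defs
  imports "HOL-Analysis.Analysis"
begin

text \<open>F is three times continuously Frechet differentiable on the whole space, with
  first, second and third derivatives F1, F2, F3 (multilinear maps represented as
  iterated bounded linear functions, F1 w phi = F'(w)(phi), etc.).\<close>
definition C3_with_derivs ::
  "('a::real_normed_vector \<Rightarrow> 'b::real_normed_vector) \<Rightarrow> ('a \<Rightarrow> ('a \<Rightarrow>\<^sub>L 'b))
   \<Rightarrow> ('a \<Rightarrow> ('a \<Rightarrow>\<^sub>L 'a \<Rightarrow>\<^sub>L 'b)) \<Rightarrow> ('a \<Rightarrow> ('a \<Rightarrow>\<^sub>L 'a \<Rightarrow>\<^sub>L 'a \<Rightarrow>\<^sub>L 'b)) \<Rightarrow> bool"
  where "C3_with_derivs F F1 F2 F3 \<longleftrightarrow>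
    (\<forall>w. (F has_derivative blinfun_apply (F1 w)) (at w)) \<and>
    (\<forall>w. (F1 has_derivative blinfun_apply (F2 w)) (at w)) \<and>
    (\<forall>w. (F2 has_derivative blinfun_apply (F3 w)) (at w)) \<and>
    continuous_on UNIV F3"

definition fin_dim_subspace :: "'a::real_vector set \<Rightarrow> bool"
  where "fin_dim_subspace S \<longleftrightarrow> subspace S \<and> (\<exists>B. finite B \<and> S = span B)"

end

theory Submission imports Defs begin

text \<open>Along the segment from (ut, zt) to (uh, zh), the Lagrangian L(x, y) = J x - A x y is a
  real function of s whose increment over [0, 1] is given exactly by the trapezoidal rule plus
  the remainder R(3)(2). At the endpoint (uh, zh) the discrete primal and dual equations give
  L = J uh and make the directional derivative vanish, so the estimator is exactly
  eta = J uh - J ut. Both bounds are then the triangle inequality for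
  J u - J ut = (J u - J uh) + (J uh - J ut).\<close>

lemma trapezoidal_rule_with_remainder:
  fixes f f' f'' f''' :: "real \<Rightarrow> real"
  assumes "\<And>s. (f has_vector_derivative f' s) (at s)"
    and "\<And>s. (f' has_vector_derivative f'' s) (at s)"
    and "\<And>s. (f'' has_vector_derivative f''' s) (at s)"
  shows "f 1 - f 0 = (f' 0 + f' 1) / 2 + (1/2) * integral {0..1} (\<lambda>s. f''' s * (s * (s - 1)))"
proof -
  \<comment> \<open>an antiderivative of the integrand, found by integrating by parts twice\<close>
  define G where "G s = f'' s * (s * (s - 1)) - f' s * (2 * s - 1) + 2 * f s" for s
  have "(G has_real_derivative f''' s * (s * (s - 1))) (at s)" for s
    unfolding G_def[abs_def]
    by (rule derivative_eq_intros assms[folded has_real_derivative_iff_has_vector_derivative] refl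
        | simp)+
  then have "((\<lambda>s. f''' s * (s * (s - 1))) has_integral (G 1 - G 0)) {0..1}"
    by (intro fundamental_theorem_of_calculus)
      (auto simp: has_real_derivative_iff_has_vector_derivative[symmetric]
        intro: has_field_derivative_at_within)
  then have "integral {0..1} (\<lambda>s. f''' s * (s * (s - 1))) = G 1 - G 0"
    by blast
  then show ?thesis
    unfolding G_def by (simp add: field_simps)
qed

lemma has_vector_derivative_along_line:
  fixes F :: "'a::real_normed_vector \<Rightarrow> 'b::real_normed_vector"
  assumes "\<forall>w. (F has_derivative blinfun_apply (F' w)) (at w)"
  shows "((\<lambda>s. F (x + s *\<^sub>R d)) has_vector_derivative F' (x + s *\<^sub>R d) d) (at s)"
proof -
  have "((\<lambda>s::real. x + s *\<^sub>R d) has_derivative (\<lambda>h. h *\<^sub>R d)) (at s)"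
    by (auto intro!: derivative_eq_intros)
  then have "((F \<circ> (\<lambda>s. x + s *\<^sub>R d)) has_derivative (F' (x + s *\<^sub>R d) \<circ> (\<lambda>h. h *\<^sub>R d))) (at s)"
    by (rule diff_chain_at) (use assms in blast)
  then show ?thesis
    unfolding has_vector_derivative_def o_def by (simp add: blinfun.scaleR_right)
qed

lemma has_vector_derivative_blinfun_apply_const:
  fixes G :: "real \<Rightarrow> 'a::real_normed_vector \<Rightarrow>\<^sub>L 'b::real_normed_vector"
  assumes "(G has_vector_derivative G') (at s)"
  shows "((\<lambda>s. G s v) has_vector_derivative G' v) (at s)"
  using blinfun.has_vector_derivative[OF assms, of "\<lambda>_. v" 0] by simp

lemma has_vector_derivative_blinfun_apply_line:
  fixes G :: "real \<Rightarrow> 'a::real_normed_vector \<Rightarrow>\<^sub>L 'b::real_normed_vector"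
  assumes "(G has_vector_derivative G') (at s)"
  shows "((\<lambda>s. G s (y + s *\<^sub>R d)) has_vector_derivative G s d + G' (y + s *\<^sub>R d)) (at s)"
proof -
  have "((\<lambda>s. y + s *\<^sub>R d) has_vector_derivative d) (at s)"
    by (auto intro!: derivative_eq_intros)
  from blinfun.has_vector_derivative[OF assms this] show ?thesis
    by simp
qed

lemma lagrangian_trapezoidal_expansion:
  fixes A :: "'u::real_normed_vector \<Rightarrow> ('v::real_normed_vector \<Rightarrow>\<^sub>L real)"
    and J :: "'u \<Rightarrow> real"
  assumes A1: "\<forall>w. (A has_derivative blinfun_apply (A1 w)) (at w)"
    and A2: "\<forall>w. (A1 has_derivative blinfun_apply (A2 w)) (at w)"
    and A3: "\<forall>w. (A2 has_derivative blinfun_apply (A3 w)) (at w)"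
    and J1: "\<forall>w. (J has_derivative blinfun_apply (J1 w)) (at w)"
    and J2: "\<forall>w. (J1 has_derivative blinfun_apply (J2 w)) (at w)"
    and J3: "\<forall>w. (J2 has_derivative blinfun_apply (J3 w)) (at w)"
  shows "J (x + dx) - A (x + dx) (y + dy) - (J x - A x y) =
      (1/2) * (J1 x dx - A x dy - A1 x dx y)
    + (1/2) * (J1 (x + dx) dx - A (x + dx) dy - A1 (x + dx) dx (y + dy))
    + (1/2) * integral {0..1} (\<lambda>s.
        (J3 (x + s *\<^sub>R dx) dx dx dx
         - A3 (x + s *\<^sub>R dx) dx dx dx (y + s *\<^sub>R dy)
         - 3 * A2 (x + s *\<^sub>R dx) dx dx dy) * (s * (s - 1)))"
proof -
  define x\<^sub>s where "x\<^sub>s s = x + s *\<^sub>R dx" for s :: real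
  define y\<^sub>s where "y\<^sub>s s = y + s *\<^sub>R dy" for s :: real
  define L where "L s = J (x\<^sub>s s) - A (x\<^sub>s s) (y\<^sub>s s)" for s
  \<comment> \<open>the derivatives are written in the raw shape the product rule produces, so that the
    derivative rules below match them syntactically\<close>
  define L' where "L' s = J1 (x\<^sub>s s) dx - (A (x\<^sub>s s) dy + A1 (x\<^sub>s s) dx (y\<^sub>s s))" for s
  define L'' where "L'' s = J2 (x\<^sub>s s) dx dx
      - (A1 (x\<^sub>s s) dx dy + (A1 (x\<^sub>s s) dx dy + A2 (x\<^sub>s s) dx dx (y\<^sub>s s)))" for s
  define L''' where "L''' s = J3 (x\<^sub>s s) dx dx dx
      - (A2 (x\<^sub>s s) dx dx dy + (A2 (x\<^sub>s s) dx dx dy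
        + (A2 (x\<^sub>s s) dx dx dy + A3 (x\<^sub>s s) dx dx dx (y\<^sub>s s))))" for s
  note rules = has_vector_derivative_diff has_vector_derivative_add
    has_vector_derivative_blinfun_apply_const has_vector_derivative_blinfun_apply_line
    has_vector_derivative_along_line A1 A2 A3 J1 J2 J3
  have "(L has_vector_derivative L' s) (at s)" for s
    unfolding L_def[abs_def] L'_def x\<^sub>s_def y\<^sub>s_def by (intro rules)
  moreover have "(L' has_vector_derivative L'' s) (at s)" for s
    unfolding L'_def[abs_def] L''_def x\<^sub>s_def y\<^sub>s_def by (intro rules)
  moreover have "(L'' has_vector_derivative L''' s) (at s)" for s
    unfolding L''_def[abs_def] L'''_def x\<^sub>s_def y\<^sub>s_def by (intro rules)
  ultimately have "L 1 - L 0 = (L' 0 + L' 1) / 2 + (1/2) * integral {0..1} (\<lambda>s. L''' s * (s * (s - 1)))"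
    by (rule trapezoidal_rule_with_remainder)
  moreover have "L''' s = J3 (x\<^sub>s s) dx dx dx - A3 (x\<^sub>s s) dx dx dx (y\<^sub>s s) - 3 * A2 (x\<^sub>s s) dx dx dy"
    for s
    unfolding L'''_def by simp
  ultimately show ?thesis
    unfolding L_def L'_def x\<^sub>s_def y\<^sub>s_def by (simp add: field_simps)
qed

theorem mainTheorem6:
  fixes A :: "'u::banach \<Rightarrow> ('v::banach \<Rightarrow>\<^sub>L real)"
    and A1 :: "'u \<Rightarrow> ('u \<Rightarrow>\<^sub>L 'v \<Rightarrow>\<^sub>L real)"
    and A2 :: "'u \<Rightarrow> ('u \<Rightarrow>\<^sub>L 'u \<Rightarrow>\<^sub>L 'v \<Rightarrow>\<^sub>L real)"
    and A3 :: "'u \<Rightarrow> ('u \<Rightarrow>\<^sub>L 'u \<Rightarrow>\<^sub>L 'u \<Rightarrow>\<^sub>L 'v \<Rightarrow>\<^sub>L real)"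
    and J :: "'u \<Rightarrow> real"
    and J1 :: "'u \<Rightarrow> ('u \<Rightarrow>\<^sub>L real)"
    and J2 :: "'u \<Rightarrow> ('u \<Rightarrow>\<^sub>L 'u \<Rightarrow>\<^sub>L real)"
    and J3 :: "'u \<Rightarrow> ('u \<Rightarrow>\<^sub>L 'u \<Rightarrow>\<^sub>L 'u \<Rightarrow>\<^sub>L real)"
    and u :: 'u and z :: 'v
    and Uh :: "'u set" and Vh :: "'v set"
    and uh :: 'u and zh :: 'v and ut :: 'u and zt :: 'v
    and eta :: real
  assumes A_C3: "C3_with_derivs A A1 A2 A3"
    and J_C3: "C3_with_derivs J J1 J2 J3"
    and primal: "\<forall>v. A u v = 0"
    and dual: "\<forall>\<phi>. A1 u \<phi> z = J1 u \<phi>"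
    and Uh_sub: "fin_dim_subspace Uh"
    and Vh_sub: "fin_dim_subspace Vh"
    and uh_in: "uh \<in> Uh"
    and primal_h: "\<forall>v\<in>Vh. A uh v = 0"
    and zh_in: "zh \<in> Vh"
    and dual_h: "\<forall>\<phi>\<in>Uh. A1 uh \<phi> zh = J1 uh \<phi>"
    and ut_in: "ut \<in> Uh"
    and zt_in: "zt \<in> Vh"
    and eta_def: "eta =
        (1/2) * (- A ut (zh - zt))
      + (1/2) * (J1 ut (uh - ut) - A1 ut (uh - ut) zt)
      + (- A ut zt)
      + (1/2) * integral {0..1} (\<lambda>s.
           (J3 (ut + s *\<^sub>R (uh - ut)) (uh - ut) (uh - ut) (uh - ut)
            - A3 (ut + s *\<^sub>R (uh - ut)) (uh - ut) (uh - ut) (uh - ut) (zt + s *\<^sub>R (zh - zt))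
            - 3 * A2 (ut + s *\<^sub>R (uh - ut)) (uh - ut) (uh - ut) (zh - zt)) * (s * (s - 1)))"
  shows "\<bar>J u - J ut\<bar> - \<bar>J u - J uh\<bar> \<le> \<bar>eta\<bar> \<and> \<bar>eta\<bar> \<le> \<bar>J u - J ut\<bar> + \<bar>J u - J uh\<bar>"
proof -
  have "uh - ut \<in> Uh" "zh - zt \<in> Vh"
    using Uh_sub Vh_sub uh_in ut_in zh_in zt_in
    by (simp_all add: fin_dim_subspace_def subspace_diff)
  then have galerkin: "A uh zh = 0" "A uh (zh - zt) = 0" "A1 uh (uh - ut) zh = J1 uh (uh - ut)"
    using primal_h dual_h zh_in by simp_all
  have "eta = J uh - J ut"
    using lagrangian_trapezoidal_expansion[of A A1 A2 A3 J J1 J2 J3 ut "uh - ut" zt "zh - zt"]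
      A_C3 J_C3 galerkin eta_def
    by (simp add: C3_with_derivs_def field_simps)
  then show ?thesis
    by linarith
qed

end
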